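(* Let $d\ge3$ and $\beta>0$. Then as $\varepsilon\to0$, \[\mathcal{B}_{\mathrm{Ising}}(\pi^*_\varepsilon,\beta,d)=\log2+\frac d2\log\frac{1+e^{-\beta}}{2}+\frac{4\varepsilon^4d\,e^{-2\beta}(e^\beta-1)^2\left(e^{2\beta}(d-2)-2de^\beta+d-2\right)}{(1+e^\beta)^2(1+e^{-\beta})^2}+O(\varepsilon^5),\] where $\pi^*_\varepsilon=\frac12(\delta_{2\varepsilon}+\delta_{-2\varepsilon})$.
   Context: For a probability measure $\pi$ on $[-1,1]$ let $(\mu_{\pi,i})_{i\ge1}$ be independent samples from $\pi$, let $\Lambda(x)=x\log x$, and \[\mathcal{B}_{\mathrm{Ising}}(\pi,\beta,d)=\mathbb{E}\left[\frac{\Lambda\left(\sum_{\sigma\in\{\pm1\}}\prod_{i=1}^d\left(1-(1-e^{-\beta})\frac{1+\sigma\mu_{\pi,i}}{2}\right)\right)}{2^{1-d}(1+e^{-\beta})^d}-\frac{d\,\Lambda\left(1-(1-e^{-\beta})\frac{1+\mu_{\pi,1}\mu_{\pi,2}}{2}\right)}{1+e^{-\beta}}\right].\] $\delta_x$ is the point mass at $x$. *)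

theory Defs
  imports "HOL-Probability.Probability" "HOL-Library.Landau_Symbols"
begin

definition Lam :: "real \<Rightarrow> real" where
  "Lam x = x * ln x"

definition wgt :: "real \<Rightarrow> real \<Rightarrow> real" where
  "wgt \<beta> x = 1 - (1 - exp (-\<beta>)) * (1 + x) / 2"

text \<open>Bethe functional. The i.i.d. samples (mu_{pi,i})_{i>=1} are modelled as the
coordinates 0,1,2,... of the infinite product measure of copies of pi.\<close>
definition B_Ising :: "real measure \<Rightarrow> real \<Rightarrow> nat \<Rightarrow> real" where
  "B_Ising \<pi> \<beta> d =
     (\<integral>\<mu>. ( Lam (\<Sum>\<sigma>\<in>{1::real, -1}. \<Prod>i<d. wgt \<beta> (\<sigma> * \<mu> i))
                / (2 powr (1 - real d) * (1 + exp (-\<beta>)) ^ d)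
            - real d * Lam (wgt \<beta> (\<mu> 0 * \<mu> 1)) / (1 + exp (-\<beta>)))
       \<partial>(PiM (UNIV :: nat set) (\<lambda>_. \<pi>)))"

definition pi_star :: "real \<Rightarrow> real measure" where
  "pi_star \<epsilon> = measure_pmf (pmf_of_set {2 * \<epsilon>, - 2 * \<epsilon>})"

end

theory Submission
  imports Defs "HOL-Real_Asymp.Real_Asymp"
begin

text \<open>
  Write q = tanh(beta/2). Then wgt beta x = (1 + e^-beta)/2 (1 - q x), so the vertex term of the
  Bethe functional is governed by T = ((prod (1 + q mu_i)) + (prod (1 - q mu_i)))/2 and the edge
  term by 1 - q mu_0 mu_1. Under pi*_eps all mu_i are +-2 eps, so both are 1 + O(eps), and
  Lambda(1 + x) = x + x^2/2 + O(|x|^3) may be expanded inside the expectations. The linear terms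
  have mean zero; the second moments E (T - 1)^2 = ((1 + 4q^2 eps^2)^d + (1 - 4q^2 eps^2)^d)/2 - 1
  = binom(d,2) 16 q^4 eps^4 + O(eps^6) and E (q mu_0 mu_1)^2 = 16 q^2 eps^4 produce the eps^4
  term. A cubic remainder is at most C sup|X| E X^2, which is O(eps) O(eps^4) for the vertex
  and O(eps^2) O(eps^4) for the edge.
\<close>

lemma Lam_mult:
  assumes "0 < a" "0 < x"
  shows "Lam (a * x) = x * Lam a + a * Lam x"
  using assms by (simp add: Lam_def ln_mult algebra_simps)

lemma Lam_one_plus_cubic:
  obtains C \<delta> :: real where "0 \<le> C" "0 < \<delta>" "\<delta> \<le> 1"
    "\<And>x. \<bar>x\<bar> < \<delta> \<Longrightarrow> \<bar>Lam (1 + x) - x - x\<^sup>2 / 2\<bar> \<le> C * \<bar>x\<bar> ^ 3"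
proof -
  have "(\<lambda>x::real. Lam (1 + x) - x - x\<^sup>2 / 2) \<in> O[at 0](\<lambda>x. x ^ 3)"
    unfolding Lam_def by real_asymp
  then obtain C where "C > 0"
    and "eventually (\<lambda>x. norm (Lam (1 + x) - x - x\<^sup>2 / 2) \<le> C * norm (x ^ 3)) (at 0)"
    by (elim landau_o.bigE)
  then obtain \<delta> where "\<delta> > 0"
    and bound: "\<And>x. x \<noteq> 0 \<Longrightarrow> dist x 0 < \<delta> \<Longrightarrow> norm (Lam (1 + x) - x - x\<^sup>2 / 2) \<le> C * norm (x ^ 3)"
    unfolding eventually_at by blast
  have "\<bar>Lam (1 + x) - x - x\<^sup>2 / 2\<bar> \<le> C * \<bar>x\<bar> ^ 3" if "\<bar>x\<bar> < min \<delta> 1" for x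
    using bound[of x] that by (cases "x = 0") (auto simp: Lam_def power_abs)
  with that[of C "min \<delta> 1"] \<open>C > 0\<close> \<open>\<delta> > 0\<close> show ?thesis by auto
qed

lemma (in prob_space) expectation_Lam_one_plus:
  fixes X :: "'a \<Rightarrow> real"
  assumes cubic: "\<And>x. \<bar>x\<bar> < \<delta> \<Longrightarrow> \<bar>Lam (1 + x) - x - x\<^sup>2 / 2\<bar> \<le> C * \<bar>x\<bar> ^ 3" and "0 \<le> C"
    and X: "integrable M X" "integrable M (\<lambda>\<omega>. X \<omega> ^ 2)"
    and small: "AE \<omega> in M. \<bar>X \<omega>\<bar> \<le> h" "h < \<delta>"
  shows "integrable M (\<lambda>\<omega>. Lam (1 + X \<omega>))"
    and "\<bar>expectation (\<lambda>\<omega>. Lam (1 + X \<omega>)) - expectation X - expectation (\<lambda>\<omega>. X \<omega> ^ 2) / 2\<bar>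
           \<le> C * h * expectation (\<lambda>\<omega>. X \<omega> ^ 2)"
proof -
  define \<rho> where "\<rho> x = Lam (1 + x) - x - x\<^sup>2 / 2" for x
  have [measurable]: "X \<in> borel_measurable M"
    using X(1) by auto
  have \<rho>_bound: "AE \<omega> in M. \<bar>\<rho> (X \<omega>)\<bar> \<le> C * h * X \<omega> ^ 2"
    using small(1)
  proof eventually_elim
    case (elim \<omega>)
    have "\<bar>\<rho> (X \<omega>)\<bar> \<le> C * \<bar>X \<omega>\<bar> ^ 3"
      unfolding \<rho>_def using elim small(2) by (intro cubic) simp
    also have "\<dots> = C * \<bar>X \<omega>\<bar> * X \<omega> ^ 2"
      by (simp add: power3_eq_cube power2_eq_square abs_mult_self_eq)
    also have "\<dots> \<le> C * h * X \<omega> ^ 2"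
      using elim \<open>0 \<le> C\<close> by (intro mult_right_mono mult_left_mono) auto
    finally show ?case .
  qed
  have \<rho>_integrable: "integrable M (\<lambda>\<omega>. \<rho> (X \<omega>))"
  proof (rule Bochner_Integration.integrable_bound)
    show "integrable M (\<lambda>\<omega>. C * h * X \<omega> ^ 2)"
      using X(2) by simp
    show "(\<lambda>\<omega>. \<rho> (X \<omega>)) \<in> borel_measurable M"
      unfolding \<rho>_def Lam_def by measurable
    show "AE \<omega> in M. norm (\<rho> (X \<omega>)) \<le> norm (C * h * X \<omega> ^ 2)"
      using \<rho>_bound by eventually_elim simp
  qed
  have Lam_eq: "Lam (1 + X \<omega>) = X \<omega> + X \<omega> ^ 2 / 2 + \<rho> (X \<omega>)" for \<omega>
    by (simp add: \<rho>_def)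
  show "integrable M (\<lambda>\<omega>. Lam (1 + X \<omega>))"
    unfolding Lam_eq using X \<rho>_integrable by auto
  have "expectation (\<lambda>\<omega>. Lam (1 + X \<omega>)) - expectation X - expectation (\<lambda>\<omega>. X \<omega> ^ 2) / 2
      = expectation (\<lambda>\<omega>. \<rho> (X \<omega>))"
    unfolding Lam_eq using X \<rho>_integrable by simp
  also have "\<bar>\<dots>\<bar> \<le> expectation (\<lambda>\<omega>. \<bar>\<rho> (X \<omega>)\<bar>)"
    by (rule integral_abs_bound)
  also have "\<dots> \<le> expectation (\<lambda>\<omega>. C * h * X \<omega> ^ 2)"
    using \<rho>_bound \<rho>_integrable X(2) by (intro integral_mono_AE) auto
  also have "\<dots> = C * h * expectation (\<lambda>\<omega>. X \<omega> ^ 2)"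
    by simp
  finally show "\<bar>expectation (\<lambda>\<omega>. Lam (1 + X \<omega>)) - expectation X - expectation (\<lambda>\<omega>. X \<omega> ^ 2) / 2\<bar>
      \<le> C * h * expectation (\<lambda>\<omega>. X \<omega> ^ 2)" .
qed

lemma (in product_prob_space) PiM_prod:
  fixes f :: "'i \<Rightarrow> 'a \<Rightarrow> real"
  assumes "finite J" "J \<subseteq> I" "\<And>i. i \<in> J \<Longrightarrow> integrable (M i) (f i)"
  shows integrable_PiM_prod: "integrable (PiM I M) (\<lambda>\<omega>. \<Prod>i\<in>J. f i (\<omega> i))"
    and integral_PiM_prod: "(\<integral>\<omega>. (\<Prod>i\<in>J. f i (\<omega> i)) \<partial>PiM I M) = (\<Prod>i\<in>J. integral\<^sup>L (M i) (f i))"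
proof -
  let ?g = "\<lambda>\<omega>. \<Prod>i\<in>J. f i (\<omega> i)"
  have distr: "distr (PiM I M) (PiM J M) (\<lambda>\<omega>. restrict \<omega> J) = PiM J M"
    using assms by (intro distr_PiM_restrict_finite)
  have integrable_J: "integrable (PiM J M) ?g"
    using assms by (intro product_integrable_prod)
  have restrict: "?g (restrict \<omega> J) = ?g \<omega>" for \<omega>
    by (intro prod.cong) auto
  have [measurable]: "(\<lambda>\<omega>. restrict \<omega> J) \<in> measurable (PiM I M) (PiM J M)"
    using assms(2) by (rule measurable_restrict_subset)
  have [measurable]: "?g \<in> borel_measurable (PiM J M)"
    using integrable_J by auto
  show "integrable (PiM I M) ?g"
    using integrable_J integrable_distr_eq[of "\<lambda>\<omega>. restrict \<omega> J" "PiM I M" "PiM J M" ?g]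
    by (simp add: distr restrict)
  have "(\<integral>\<omega>. ?g \<omega> \<partial>PiM I M) = (\<integral>\<omega>. ?g \<omega> \<partial>PiM J M)"
    using integral_distr[of "\<lambda>\<omega>. restrict \<omega> J" "PiM I M" "PiM J M" ?g]
    by (simp add: distr restrict)
  also have "\<dots> = (\<Prod>i\<in>J. integral\<^sup>L (M i) (f i))"
    using assms by (intro product_integral_prod)
  finally show "(\<integral>\<omega>. ?g \<omega> \<partial>PiM I M) = (\<Prod>i\<in>J. integral\<^sup>L (M i) (f i))" .
qed

abbreviation iid :: "real measure \<Rightarrow> (nat \<Rightarrow> real) measure" where
  "iid \<pi> \<equiv> PiM UNIV (\<lambda>_. \<pi>)"

definition vertex_variance :: "nat \<Rightarrow> real \<Rightarrow> real" where
  "vertex_variance d y = ((1 + y) ^ d + (1 - y) ^ d) / 2 - 1"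

definition vertex_weight :: "real \<Rightarrow> nat \<Rightarrow> (nat \<Rightarrow> real) \<Rightarrow> real" where
  "vertex_weight q d \<mu> = ((\<Prod>i<d. 1 + q * \<mu> i) + (\<Prod>i<d. 1 - q * \<mu> i)) / 2"

lemma vertex_weight_dev_bound:
  assumes "\<And>i. i < d \<Longrightarrow> \<bar>q * \<mu> i\<bar> \<le> a"
  shows "\<bar>vertex_weight q d \<mu> - 1\<bar> \<le> (1 + a) ^ d - 1"
proof -
  have "\<bar>(\<Prod>i<d. 1 + s * (q * \<mu> i)) - 1\<bar> \<le> (1 + a) ^ d - 1" if "\<bar>s\<bar> = 1" for s
  proof -
    have "\<bar>(\<Prod>i<d. 1 + s * (q * \<mu> i)) - 1\<bar> \<le> (\<Prod>i<d. 1 + \<bar>s * (q * \<mu> i)\<bar>) - 1"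
      using norm_prod_minus1_le_prod_minus1[of "\<lambda>i. s * (q * \<mu> i)" "{..<d}"] by simp
    also have "(\<Prod>i<d. 1 + \<bar>s * (q * \<mu> i)\<bar>) \<le> (\<Prod>i<d. 1 + a)"
      using assms that by (intro prod_mono) (auto simp: abs_mult)
    finally show ?thesis by simp
  qed
  from this[of 1] this[of "-1"] show ?thesis
    unfolding vertex_weight_def by (simp add: abs_le_iff field_simps)
qed

lemma wgt_eq_tanh: "wgt \<beta> x = (1 + exp (- \<beta>)) / 2 * (1 - tanh (\<beta> / 2) * x)"
proof -
  have "1 + exp (- \<beta>) \<noteq> 0"
    by (metis add_pos_pos exp_gt_zero less_irrefl zero_less_one)
  then show ?thesis
    by (simp add: wgt_def tanh_real_altdef field_simps)
qed

lemma spin_sum_wgt: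
  "(\<Sum>\<sigma>\<in>{1::real, -1}. \<Prod>i<d. wgt \<beta> (\<sigma> * \<mu> i))
     = 2 powr (1 - real d) * (1 + exp (- \<beta>)) ^ d * vertex_weight (tanh (\<beta> / 2)) d \<mu>"
proof -
  have "(\<Sum>\<sigma>\<in>{1::real, -1}. \<Prod>i<d. wgt \<beta> (\<sigma> * \<mu> i)) = (\<Prod>i<d. wgt \<beta> (\<mu> i)) + (\<Prod>i<d. wgt \<beta> (- \<mu> i))"
    by simp
  also have "\<dots> = ((1 + exp (- \<beta>)) / 2) ^ d
      * ((\<Prod>i<d. 1 + tanh (\<beta> / 2) * \<mu> i) + (\<Prod>i<d. 1 - tanh (\<beta> / 2) * \<mu> i))"
    unfolding wgt_eq_tanh prod.distrib prod_constant card_lessThan by (simp add: algebra_simps)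
  also have "\<dots> = 2 powr (1 - real d) * (1 + exp (- \<beta>)) ^ d * vertex_weight (tanh (\<beta> / 2)) d \<mu>"
    by (simp add: vertex_weight_def powr_diff powr_realpow power_divide)
  finally show ?thesis .
qed

lemma Bethe_integrand_eq:
  fixes \<beta> :: real and d :: nat and \<mu> :: "nat \<Rightarrow> real"
  defines "q \<equiv> tanh (\<beta> / 2)"
    and "N \<equiv> 2 powr (1 - real d) * (1 + exp (- \<beta>)) ^ d"
    and "L \<equiv> ln ((1 + exp (- \<beta>)) / 2)"
  assumes "0 < vertex_weight q d \<mu>" and "0 < 1 - q * (\<mu> 0 * \<mu> 1)"
  shows "Lam (\<Sum>\<sigma>\<in>{1::real, -1}. \<Prod>i<d. wgt \<beta> (\<sigma> * \<mu> i)) / N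
      - real d * Lam (wgt \<beta> (\<mu> 0 * \<mu> 1)) / (1 + exp (- \<beta>))
    = ln N * vertex_weight q d \<mu> + Lam (vertex_weight q d \<mu>)
      - real d / 2 * (L * (1 - q * (\<mu> 0 * \<mu> 1)) + Lam (1 - q * (\<mu> 0 * \<mu> 1)))"
proof -
  have "0 < N" "0 < (1 + exp (- \<beta>)) / 2"
    unfolding N_def by (simp_all add: add_pos_pos)
  have vertex: "Lam (\<Sum>\<sigma>\<in>{1::real, -1}. \<Prod>i<d. wgt \<beta> (\<sigma> * \<mu> i)) / N
      = ln N * vertex_weight q d \<mu> + Lam (vertex_weight q d \<mu>)"
    unfolding spin_sum_wgt q_def[symmetric] N_def[symmetric]
    using Lam_mult[OF \<open>0 < N\<close> assms(4)] \<open>0 < N\<close> by (simp add: Lam_def field_simps)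
  have "Lam (wgt \<beta> (\<mu> 0 * \<mu> 1))
      = (1 - q * (\<mu> 0 * \<mu> 1)) * Lam ((1 + exp (- \<beta>)) / 2)
        + (1 + exp (- \<beta>)) / 2 * Lam (1 - q * (\<mu> 0 * \<mu> 1))"
    unfolding wgt_eq_tanh q_def[symmetric]
    using \<open>0 < (1 + exp (- \<beta>)) / 2\<close> assms(5) by (rule Lam_mult)
  then have edge: "Lam (wgt \<beta> (\<mu> 0 * \<mu> 1)) / (1 + exp (- \<beta>))
      = (L * (1 - q * (\<mu> 0 * \<mu> 1)) + Lam (1 - q * (\<mu> 0 * \<mu> 1))) / 2"
    using \<open>0 < (1 + exp (- \<beta>)) / 2\<close>
    by (simp add: L_def Lam_def[of "(1 + exp (- \<beta>)) / 2"] field_simps)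
  show ?thesis
    unfolding vertex times_divide_eq_right[symmetric] edge by (simp add: field_simps)
qed

context
  fixes \<pi> :: "real measure"
  assumes prob_space_\<pi>: "prob_space \<pi>"
    and integrable_id: "integrable \<pi> (\<lambda>x. x)"
    and integrable_sq: "integrable \<pi> (\<lambda>x. x ^ 2)"
    and centred: "(\<integral>x. x \<partial>\<pi>) = 0"
begin

interpretation product_prob_space "\<lambda>_::nat. \<pi>" UNIV
  using prob_space_\<pi> by (rule product_prob_spaceI)

lemma measurable_iid_coordinate [measurable]: "(\<lambda>\<mu>. \<mu> i) \<in> borel_measurable (iid \<pi>)"
proof (rule measurable_compose[OF measurable_component_singleton])
  show "(\<lambda>x. x) \<in> borel_measurable \<pi>"
    using integrable_id by auto
qed simp

lemma iid_prod_quadratic: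
  assumes "finite J"
  shows "integrable (iid \<pi>) (\<lambda>\<mu>. \<Prod>i\<in>J. a + b * \<mu> i + c * \<mu> i ^ 2)" (is ?integrable)
    and "(\<integral>\<mu>. (\<Prod>i\<in>J. a + b * \<mu> i + c * \<mu> i ^ 2) \<partial>iid \<pi>) = (a + c * (\<integral>x. x ^ 2 \<partial>\<pi>)) ^ card J"
      (is ?integral)
proof -
  have integrable: "integrable \<pi> (\<lambda>x. a + b * x + c * x ^ 2)"
    using integrable_id integrable_sq by auto
  have "(\<integral>x. a + b * x + c * x ^ 2 \<partial>\<pi>) = a + c * (\<integral>x. x ^ 2 \<partial>\<pi>)"
    using integrable_id integrable_sq centred by (simp add: prob_space.prob_space[OF prob_space_\<pi>])
  with integrable assms show ?integrable ?integral
    using integrable_PiM_prod[of J "\<lambda>_ x. a + b * x + c * x ^ 2"]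
      integral_PiM_prod[of J "\<lambda>_ x. a + b * x + c * x ^ 2"] by simp_all
qed

lemma vertex_weight_moments:
  shows integrable_vertex_weight: "integrable (iid \<pi>) (vertex_weight q d)"
    and expectation_vertex_weight: "(\<integral>\<mu>. vertex_weight q d \<mu> \<partial>iid \<pi>) = 1"
    and integrable_vertex_weight_dev_sq: "integrable (iid \<pi>) (\<lambda>\<mu>. (vertex_weight q d \<mu> - 1) ^ 2)"
    and expectation_vertex_weight_dev_sq:
      "(\<integral>\<mu>. (vertex_weight q d \<mu> - 1) ^ 2 \<partial>iid \<pi>) = vertex_variance d (q\<^sup>2 * (\<integral>x. x ^ 2 \<partial>\<pi>))"
proof -
  define P where "P b c \<mu> = (\<Prod>i<d. 1 + b * \<mu> i + c * \<mu> i ^ 2)" for b c :: real and \<mu> :: "nat \<Rightarrow> real"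
  have P_moments: "integrable (iid \<pi>) (P b c)" "(\<integral>\<mu>. P b c \<mu> \<partial>iid \<pi>) = (1 + c * (\<integral>x. x ^ 2 \<partial>\<pi>)) ^ d"
    for b c
    using iid_prod_quadratic[of "{..<d}" 1 b c] by (simp_all add: P_def[abs_def])
  have vertex_weight_eq: "vertex_weight q d \<mu> = (P q 0 \<mu> + P (- q) 0 \<mu>) / 2" for \<mu>
    by (simp add: vertex_weight_def P_def)
  have dev_sq_eq: "(vertex_weight q d \<mu> - 1) ^ 2
      = (P (2 * q) (q\<^sup>2) \<mu> + 2 * P 0 (- q\<^sup>2) \<mu> + P (- 2 * q) (q\<^sup>2) \<mu>) / 4
        - (P q 0 \<mu> + P (- q) 0 \<mu>) + 1" for \<mu>
  proof -
    have "P (2 * q) (q\<^sup>2) \<mu> = (P q 0 \<mu>)\<^sup>2" "P (- 2 * q) (q\<^sup>2) \<mu> = (P (- q) 0 \<mu>)\<^sup>2"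
      "P 0 (- q\<^sup>2) \<mu> = P q 0 \<mu> * P (- q) 0 \<mu>"
      by (simp_all add: P_def power2_eq_square algebra_simps flip: prod.distrib)
    then show ?thesis
      by (simp add: vertex_weight_eq power2_eq_square field_simps)
  qed
  show "integrable (iid \<pi>) (vertex_weight q d)"
    unfolding vertex_weight_eq using P_moments by simp
  show "(\<integral>\<mu>. vertex_weight q d \<mu> \<partial>iid \<pi>) = 1"
    unfolding vertex_weight_eq using P_moments by simp
  show "integrable (iid \<pi>) (\<lambda>\<mu>. (vertex_weight q d \<mu> - 1) ^ 2)"
    unfolding dev_sq_eq using P_moments by simp
  show "(\<integral>\<mu>. (vertex_weight q d \<mu> - 1) ^ 2 \<partial>iid \<pi>) = vertex_variance d (q\<^sup>2 * (\<integral>x. x ^ 2 \<partial>\<pi>))"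
    unfolding dev_sq_eq vertex_variance_def using P_moments P.prob_space by simp
qed

lemma edge_moments:
  shows integrable_edge: "integrable (iid \<pi>) (\<lambda>\<mu>. \<mu> 0 * \<mu> 1)"
    and expectation_edge: "(\<integral>\<mu>. \<mu> 0 * \<mu> 1 \<partial>iid \<pi>) = 0"
    and integrable_edge_sq: "integrable (iid \<pi>) (\<lambda>\<mu>. (\<mu> 0 * \<mu> 1) ^ 2)"
    and expectation_edge_sq: "(\<integral>\<mu>. (\<mu> 0 * \<mu> 1) ^ 2 \<partial>iid \<pi>) = (\<integral>x. x ^ 2 \<partial>\<pi>) ^ 2"
  using iid_prod_quadratic[of "{0, 1}" 0 1 0] iid_prod_quadratic[of "{0, 1}" 0 0 1]
  by (simp_all add: power_mult_distrib, simp add: power2_eq_square)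

lemma B_Ising_eq_expectation:
  fixes \<beta> :: real and d :: nat
  defines "q \<equiv> tanh (\<beta> / 2)"
  assumes pos: "AE \<mu> in iid \<pi>. 0 < vertex_weight q d \<mu> \<and> 0 < 1 - q * (\<mu> 0 * \<mu> 1)"
    and integrable_Lam: "integrable (iid \<pi>) (\<lambda>\<mu>. Lam (vertex_weight q d \<mu>))"
      "integrable (iid \<pi>) (\<lambda>\<mu>. Lam (1 - q * (\<mu> 0 * \<mu> 1)))"
  shows "B_Ising \<pi> \<beta> d = ln 2 + real d / 2 * ln ((1 + exp (- \<beta>)) / 2)
           + (\<integral>\<mu>. Lam (vertex_weight q d \<mu>) \<partial>iid \<pi>)
           - real d / 2 * (\<integral>\<mu>. Lam (1 - q * (\<mu> 0 * \<mu> 1)) \<partial>iid \<pi>)"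
proof -
  define N where "N = 2 powr (1 - real d) * (1 + exp (- \<beta>)) ^ d"
  define L where "L = ln ((1 + exp (- \<beta>)) / 2)"
  have "B_Ising \<pi> \<beta> d = (\<integral>\<mu>. ln N * vertex_weight q d \<mu> + Lam (vertex_weight q d \<mu>)
      - real d / 2 * (L * (1 - q * (\<mu> 0 * \<mu> 1)) + Lam (1 - q * (\<mu> 0 * \<mu> 1))) \<partial>iid \<pi>)"
    unfolding B_Ising_def N_def[symmetric]
  proof (rule integral_cong_AE)
    show "AE \<mu> in iid \<pi>. Lam (\<Sum>\<sigma>\<in>{1::real, -1}. \<Prod>i<d. wgt \<beta> (\<sigma> * \<mu> i)) / N
        - real d * Lam (wgt \<beta> (\<mu> 0 * \<mu> 1)) / (1 + exp (- \<beta>))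
      = ln N * vertex_weight q d \<mu> + Lam (vertex_weight q d \<mu>)
        - real d / 2 * (L * (1 - q * (\<mu> 0 * \<mu> 1)) + Lam (1 - q * (\<mu> 0 * \<mu> 1)))"
      using pos unfolding q_def N_def L_def by eventually_elim (intro Bethe_integrand_eq, auto)
  qed (simp_all add: Lam_def wgt_def vertex_weight_def)
  also have "\<dots> = ln N + (\<integral>\<mu>. Lam (vertex_weight q d \<mu>) \<partial>iid \<pi>)
      - real d / 2 * (L + (\<integral>\<mu>. Lam (1 - q * (\<mu> 0 * \<mu> 1)) \<partial>iid \<pi>))"
    using integrable_Lam integrable_vertex_weight[of q d] integrable_edge expectation_edge
    by (simp add: expectation_vertex_weight P.prob_space)
  also have "ln N = ln 2 + real d * L"
  proof -
    have "0 < 1 + exp (- \<beta>)"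
      by (simp add: add_pos_pos)
    then show ?thesis
      by (simp add: N_def L_def ln_mult ln_powr ln_realpow ln_div algebra_simps)
  qed
  finally show ?thesis
    by (simp add: L_def algebra_simps)
qed

end

lemma prob_space_pi_star: "prob_space (pi_star \<epsilon>)"
  unfolding pi_star_def by (rule prob_space_measure_pmf)

lemma integrable_pi_star: "integrable (pi_star \<epsilon>) (f :: real \<Rightarrow> real)"
  unfolding pi_star_def by (rule integrable_measure_pmf_finite) simp

lemma integral_pi_star: "(\<integral>x. f x \<partial>pi_star \<epsilon>) = (f (2 * \<epsilon>) + f (- 2 * \<epsilon>)) / (2 :: real)"
  unfolding pi_star_def by (cases "\<epsilon> = 0") (simp_all add: integral_pmf_of_set)

lemma AE_iid_pi_star_small:
  assumes "\<bar>q\<bar> \<le> 1"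
  shows "AE \<mu> in iid (pi_star \<epsilon>).
           \<bar>vertex_weight q d \<mu> - 1\<bar> \<le> (1 + 2 * \<bar>\<epsilon>\<bar>) ^ d - 1 \<and> \<bar>q * (\<mu> 0 * \<mu> 1)\<bar> \<le> 4 * \<epsilon>\<^sup>2"
proof -
  interpret product_prob_space "\<lambda>_::nat. pi_star \<epsilon>" UNIV
    using prob_space_pi_star by (rule product_prob_spaceI)
  have "AE \<mu> in iid (pi_star \<epsilon>). \<forall>i. \<bar>\<mu> i\<bar> = 2 * \<bar>\<epsilon>\<bar>"
    unfolding AE_all_countable pi_star_def
    by (intro allI AE_component[unfolded pi_star_def] AE_pmfI) (auto simp: abs_mult)
  then show ?thesis
  proof eventually_elim
    case (elim \<mu>)
    have "\<bar>q * \<mu> i\<bar> \<le> 2 * \<bar>\<epsilon>\<bar>" for i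
      using elim assms mult_right_mono[of "\<bar>q\<bar>" 1 "2 * \<bar>\<epsilon>\<bar>"] by (simp add: abs_mult)
    moreover have "\<bar>q * (\<mu> 0 * \<mu> 1)\<bar> \<le> 4 * \<epsilon>\<^sup>2"
      using elim assms mult_right_mono[of "\<bar>q\<bar>" 1 "4 * \<epsilon>\<^sup>2"]
      by (simp add: abs_mult power2_eq_square)
    ultimately show ?case
      by (simp add: vertex_weight_dev_bound)
  qed
qed

lemma B_Ising_pi_star_error_bound:
  fixes d :: nat and \<beta> \<epsilon> C \<delta> :: real
  defines "q \<equiv> tanh (\<beta> / 2)"
  assumes cubic: "\<And>x. \<bar>x\<bar> < \<delta> \<Longrightarrow> \<bar>Lam (1 + x) - x - x\<^sup>2 / 2\<bar> \<le> C * \<bar>x\<bar> ^ 3"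
    and "0 \<le> C" "\<delta> \<le> 1"
    and small: "(1 + 2 * \<bar>\<epsilon>\<bar>) ^ d - 1 < \<delta>" "4 * \<epsilon>\<^sup>2 < \<delta>"
  shows "\<bar>B_Ising (pi_star \<epsilon>) \<beta> d - (ln 2 + real d / 2 * ln ((1 + exp (- \<beta>)) / 2)
              + vertex_variance d (4 * q\<^sup>2 * \<epsilon>\<^sup>2) / 2 - 4 * real d * q\<^sup>2 * \<epsilon> ^ 4)\<bar>
         \<le> C * ((1 + 2 * \<bar>\<epsilon>\<bar>) ^ d - 1) * vertex_variance d (4 * q\<^sup>2 * \<epsilon>\<^sup>2)
            + real d / 2 * C * (4 * \<epsilon>\<^sup>2) * (16 * q\<^sup>2 * \<epsilon> ^ 4)"
proof -
  define W where "W = vertex_variance d (4 * q\<^sup>2 * \<epsilon>\<^sup>2)"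
  define X where "X \<mu> = vertex_weight q d \<mu> - 1" for \<mu> :: "nat \<Rightarrow> real"
  define Y where "Y \<mu> = - q * (\<mu> 0 * \<mu> 1)" for \<mu> :: "nat \<Rightarrow> real"
  let ?M = "iid (pi_star \<epsilon>)"
  let ?h = "(1 + 2 * \<bar>\<epsilon>\<bar>) ^ d - 1"
  note \<pi> = prob_space_pi_star integrable_pi_star integrable_pi_star
  interpret product_prob_space "\<lambda>_::nat. pi_star \<epsilon>" UNIV
    using prob_space_pi_star by (rule product_prob_spaceI)
  have centred: "(\<integral>x. x \<partial>pi_star \<epsilon>) = 0" and second_moment: "(\<integral>x. x ^ 2 \<partial>pi_star \<epsilon>) = 4 * \<epsilon>\<^sup>2"
    by (simp_all add: integral_pi_star power_mult_distrib)
  have "\<bar>q\<bar> \<le> 1"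
    unfolding q_def using tanh_real_bounds[of "\<beta> / 2"] by auto
  then have X_small: "AE \<mu> in ?M. \<bar>X \<mu>\<bar> \<le> ?h" and Y_small: "AE \<mu> in ?M. \<bar>Y \<mu>\<bar> \<le> 4 * \<epsilon>\<^sup>2"
    by (auto simp: X_def Y_def elim: eventually_mono[OF AE_iid_pi_star_small])
  have X_moments: "integrable ?M X" "integrable ?M (\<lambda>\<mu>. X \<mu> ^ 2)"
      "(\<integral>\<mu>. X \<mu> \<partial>?M) = 0" "(\<integral>\<mu>. X \<mu> ^ 2 \<partial>?M) = W"
    using vertex_weight_moments[OF \<pi> centred, of q d] P.prob_space
    by (simp_all add: X_def[abs_def] W_def second_moment algebra_simps)
  have Y_moments: "integrable ?M Y" "integrable ?M (\<lambda>\<mu>. Y \<mu> ^ 2)"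
      "(\<integral>\<mu>. Y \<mu> \<partial>?M) = 0" "(\<integral>\<mu>. Y \<mu> ^ 2 \<partial>?M) = 16 * q\<^sup>2 * \<epsilon> ^ 4"
    using edge_moments[OF \<pi> centred]
    by (simp_all add: Y_def[abs_def] second_moment power_mult_distrib)
  have X_Lam: "integrable ?M (\<lambda>\<mu>. Lam (1 + X \<mu>))"
      "\<bar>(\<integral>\<mu>. Lam (1 + X \<mu>) \<partial>?M) - W / 2\<bar> \<le> C * ?h * W"
    using P.expectation_Lam_one_plus[OF cubic \<open>0 \<le> C\<close> X_moments(1,2) X_small small(1)]
      X_moments(3,4) by simp_all
  have Y_Lam: "integrable ?M (\<lambda>\<mu>. Lam (1 + Y \<mu>))"
      "\<bar>(\<integral>\<mu>. Lam (1 + Y \<mu>) \<partial>?M) - 8 * q\<^sup>2 * \<epsilon> ^ 4\<bar> \<le> C * (4 * \<epsilon>\<^sup>2) * (16 * q\<^sup>2 * \<epsilon> ^ 4)"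
    using P.expectation_Lam_one_plus[OF cubic \<open>0 \<le> C\<close> Y_moments(1,2) Y_small small(2)]
      Y_moments(3,4) by simp_all
  have pos: "AE \<mu> in ?M. 0 < vertex_weight q d \<mu> \<and> 0 < 1 - q * (\<mu> 0 * \<mu> 1)"
    using X_small Y_small
    by eventually_elim (use small \<open>\<delta> \<le> 1\<close> in \<open>auto simp: X_def Y_def\<close>)
  have "B_Ising (pi_star \<epsilon>) \<beta> d
        - (ln 2 + real d / 2 * ln ((1 + exp (- \<beta>)) / 2) + W / 2 - 4 * real d * q\<^sup>2 * \<epsilon> ^ 4)
      = ((\<integral>\<mu>. Lam (1 + X \<mu>) \<partial>?M) - W / 2)
        - real d / 2 * ((\<integral>\<mu>. Lam (1 + Y \<mu>) \<partial>?M) - 8 * q\<^sup>2 * \<epsilon> ^ 4)"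
    using B_Ising_eq_expectation[OF \<pi> centred pos[unfolded q_def]] X_Lam(1) Y_Lam(1)
    by (simp add: X_def Y_def q_def algebra_simps)
  also have "\<bar>\<dots>\<bar> \<le> \<bar>(\<integral>\<mu>. Lam (1 + X \<mu>) \<partial>?M) - W / 2\<bar>
      + real d / 2 * \<bar>(\<integral>\<mu>. Lam (1 + Y \<mu>) \<partial>?M) - 8 * q\<^sup>2 * \<epsilon> ^ 4\<bar>"
    by (rule order_trans[OF abs_triangle_ineq4]) (simp add: abs_mult)
  also have "\<dots> \<le> C * ?h * W + real d / 2 * (C * (4 * \<epsilon>\<^sup>2) * (16 * q\<^sup>2 * \<epsilon> ^ 4))"
    using X_Lam(2) Y_Lam(2) by (intro add_mono mult_left_mono) auto
  finally show ?thesis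
    unfolding W_def by (simp add: algebra_simps)
qed

lemma B_Ising_pi_star_expansion:
  fixes d :: nat and \<beta> :: real
  defines "q \<equiv> tanh (\<beta> / 2)"
  shows "(\<lambda>\<epsilon>. B_Ising (pi_star \<epsilon>) \<beta> d - (ln 2 + real d / 2 * ln ((1 + exp (- \<beta>)) / 2)
            + vertex_variance d (4 * q\<^sup>2 * \<epsilon>\<^sup>2) / 2 - 4 * real d * q\<^sup>2 * \<epsilon> ^ 4))
         \<in> O[at 0](\<lambda>\<epsilon>. \<epsilon> ^ 5)"
proof -
  obtain C \<delta> :: real where "0 \<le> C" "0 < \<delta>" "\<delta> \<le> 1"
    and cubic: "\<And>x. \<bar>x\<bar> < \<delta> \<Longrightarrow> \<bar>Lam (1 + x) - x - x\<^sup>2 / 2\<bar> \<le> C * \<bar>x\<bar> ^ 3"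
    using Lam_one_plus_cubic by blast
  define bound where "bound \<epsilon> = C * ((1 + 2 * \<bar>\<epsilon>\<bar>) ^ d - 1) * vertex_variance d (4 * q\<^sup>2 * \<epsilon>\<^sup>2)
      + real d / 2 * C * (4 * \<epsilon>\<^sup>2) * (16 * q\<^sup>2 * \<epsilon> ^ 4)" for \<epsilon>
  have "((\<lambda>\<epsilon>::real. (1 + 2 * \<bar>\<epsilon>\<bar>) ^ d - 1) \<longlongrightarrow> 0) (at 0)" "((\<lambda>\<epsilon>::real. 4 * \<epsilon>\<^sup>2) \<longlongrightarrow> 0) (at 0)"
    by real_asymp+
  from this[THEN order_tendstoD(2), OF \<open>0 < \<delta>\<close>]
  have "eventually (\<lambda>\<epsilon>. \<bar>B_Ising (pi_star \<epsilon>) \<beta> d - (ln 2 + real d / 2 * ln ((1 + exp (- \<beta>)) / 2)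
            + vertex_variance d (4 * q\<^sup>2 * \<epsilon>\<^sup>2) / 2 - 4 * real d * q\<^sup>2 * \<epsilon> ^ 4)\<bar> \<le> bound \<epsilon>) (at 0)"
    unfolding bound_def q_def
    by eventually_elim (rule B_Ising_pi_star_error_bound[OF cubic \<open>0 \<le> C\<close> \<open>\<delta> \<le> 1\<close>])
  then have "(\<lambda>\<epsilon>. B_Ising (pi_star \<epsilon>) \<beta> d - (ln 2 + real d / 2 * ln ((1 + exp (- \<beta>)) / 2)
            + vertex_variance d (4 * q\<^sup>2 * \<epsilon>\<^sup>2) / 2 - 4 * real d * q\<^sup>2 * \<epsilon> ^ 4)) \<in> O[at 0](bound)"
    by (intro landau_o.big_mono) (auto elim!: eventually_mono)
  also have "bound \<in> O[at 0](\<lambda>\<epsilon>. \<epsilon> ^ 5)"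
    unfolding bound_def vertex_variance_def by real_asymp
  finally show ?thesis .
qed

lemma vertex_variance_second_order:
  "(\<lambda>y. vertex_variance d y - real d * (real d - 1) / 2 * y\<^sup>2) \<in> O[at 0](\<lambda>y. y ^ 3)"
  unfolding vertex_variance_def by real_asymp

lemma vertex_variance_quadratic_bigo:
  "(\<lambda>\<epsilon>. vertex_variance d (a * \<epsilon>\<^sup>2) - real d * (real d - 1) / 2 * (a * \<epsilon>\<^sup>2)\<^sup>2) \<in> O[at 0](\<lambda>\<epsilon>. \<epsilon> ^ 5)"
proof (cases "a = 0")
  case True
  then show ?thesis
    by (simp add: vertex_variance_def)
next
  case False
  then have "filterlim (\<lambda>\<epsilon>::real. a * \<epsilon>\<^sup>2) (at 0) (at 0)"
    by (intro filterlim_atI) (real_asymp, simp add: eventually_at_filter)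
  then have "(\<lambda>\<epsilon>. vertex_variance d (a * \<epsilon>\<^sup>2) - real d * (real d - 1) / 2 * (a * \<epsilon>\<^sup>2)\<^sup>2)
      \<in> O[at 0](\<lambda>\<epsilon>. (a * \<epsilon>\<^sup>2) ^ 3)"
    by (rule landau_o.big.compose[OF vertex_variance_second_order])
  also have "(\<lambda>\<epsilon>::real. (a * \<epsilon>\<^sup>2) ^ 3) \<in> O[at 0](\<lambda>\<epsilon>. \<epsilon> ^ 5)"
    unfolding power_mult_distrib by real_asymp
  finally show ?thesis .
qed

lemma tanh_half: "tanh (x / 2) = (exp x - 1) / (exp x + 1 :: real)"
proof -
  have "tanh (x / 2) = tanh (ln (exp (x / 2)))"
    by simp
  also have "\<dots> = (exp x - 1) / (exp x + 1)"
    by (subst tanh_ln_real) (simp_all flip: exp_of_nat_mult)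
  finally show ?thesis .
qed

lemma correction_term_tanh:
  "4 * \<epsilon> ^ 4 * real d * exp (- 2 * \<beta>) * (exp \<beta> - 1) ^ 2
       * (exp (2 * \<beta>) * (real d - 2) - 2 * real d * exp \<beta> + real d - 2)
       / ((1 + exp \<beta>) ^ 2 * (1 + exp (- \<beta>)) ^ 2)
     = real d * (real d - 1) / 4 * (4 * (tanh (\<beta> / 2))\<^sup>2 * \<epsilon>\<^sup>2)\<^sup>2
       - 4 * real d * (tanh (\<beta> / 2))\<^sup>2 * \<epsilon> ^ 4"
proof -
  define E where "E = exp \<beta>"
  define q where "q = tanh (\<beta> / 2)"
  have "0 < E" "0 < E + 1"
    by (simp_all add: E_def add_pos_pos)
  have q: "q = (E - 1) / (E + 1)"
    by (simp add: q_def E_def tanh_half)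
  have exp_E: "exp (- \<beta>) = 1 / E" "exp (- 2 * \<beta>) = 1 / E\<^sup>2" "exp (2 * \<beta>) = E\<^sup>2"
    by (simp_all add: E_def exp_minus exp_add[symmetric] power2_eq_square inverse_eq_divide
        flip: mult_2)
  have factor: "exp (- 2 * \<beta>) * (E - 1) ^ 2 / ((1 + E) ^ 2 * (1 + exp (- \<beta>)) ^ 2) = q\<^sup>2 / (E + 1)\<^sup>2"
    unfolding exp_E q using \<open>0 < E\<close> \<open>0 < E + 1\<close> by (simp add: field_simps add.commute)
  have "((real d - 1) * q\<^sup>2 - 1) * (E + 1)\<^sup>2 = (real d - 1) * (E - 1)\<^sup>2 - (E + 1)\<^sup>2"
    unfolding q using \<open>0 < E + 1\<close> by (simp add: power_divide field_simps)
  then have quadratic: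
    "exp (2 * \<beta>) * (real d - 2) - 2 * real d * E + real d - 2 = ((real d - 1) * q\<^sup>2 - 1) * (E + 1)\<^sup>2"
    unfolding exp_E by (simp add: power2_eq_square algebra_simps)
  have "4 * \<epsilon> ^ 4 * real d * exp (- 2 * \<beta>) * (exp \<beta> - 1) ^ 2
       * (exp (2 * \<beta>) * (real d - 2) - 2 * real d * exp \<beta> + real d - 2)
       / ((1 + exp \<beta>) ^ 2 * (1 + exp (- \<beta>)) ^ 2)
     = 4 * \<epsilon> ^ 4 * real d * (exp (- 2 * \<beta>) * (E - 1) ^ 2 / ((1 + E) ^ 2 * (1 + exp (- \<beta>)) ^ 2))
       * (exp (2 * \<beta>) * (real d - 2) - 2 * real d * E + real d - 2)"
    by (simp add: E_def ac_simps)
  also have "\<dots> = 4 * \<epsilon> ^ 4 * real d * q\<^sup>2 * ((real d - 1) * q\<^sup>2 - 1)"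
    unfolding factor quadratic using \<open>0 < E + 1\<close> by simp
  also have "\<dots> = real d * (real d - 1) / 4 * (4 * q\<^sup>2 * \<epsilon>\<^sup>2)\<^sup>2 - 4 * real d * q\<^sup>2 * \<epsilon> ^ 4"
    by (simp add: power2_eq_square power4_eq_xxxx algebra_simps)
  finally show ?thesis
    by (simp only: q_def)
qed

theorem lemma5p2:
  fixes d :: nat and \<beta> :: real
  assumes "d \<ge> 3" and "\<beta> > 0"
  shows "(\<lambda>\<epsilon>. B_Ising (pi_star \<epsilon>) \<beta> d
            - (ln 2 + real d / 2 * ln ((1 + exp (-\<beta>)) / 2)
               + 4 * \<epsilon> ^ 4 * real d * exp (-2 * \<beta>) * (exp \<beta> - 1) ^ 2
                 * (exp (2 * \<beta>) * (real d - 2) - 2 * real d * exp \<beta> + real d - 2)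
                 / ((1 + exp \<beta>) ^ 2 * (1 + exp (-\<beta>)) ^ 2)))
         \<in> O[at 0](\<lambda>\<epsilon>. \<epsilon> ^ 5)"
proof -
  define q where "q = tanh (\<beta> / 2)"
  define main where "main \<epsilon> = ln 2 + real d / 2 * ln ((1 + exp (- \<beta>)) / 2)
      + vertex_variance d (4 * q\<^sup>2 * \<epsilon>\<^sup>2) / 2 - 4 * real d * q\<^sup>2 * \<epsilon> ^ 4" for \<epsilon>
  have "(\<lambda>\<epsilon>. (B_Ising (pi_star \<epsilon>) \<beta> d - main \<epsilon>)
      + (vertex_variance d (4 * q\<^sup>2 * \<epsilon>\<^sup>2) - real d * (real d - 1) / 2 * (4 * q\<^sup>2 * \<epsilon>\<^sup>2)\<^sup>2) / 2)
      \<in> O[at 0](\<lambda>\<epsilon>. \<epsilon> ^ 5)"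
    using B_Ising_pi_star_expansion[of \<beta> d] vertex_variance_quadratic_bigo[of d "4 * q\<^sup>2"]
    unfolding main_def q_def by (intro sum_in_bigo(1)) (simp_all add: mult.assoc)
  then show ?thesis
    unfolding correction_term_tanh
    by (rule landau_o.big.in_cong[THEN iffD1, rotated])
      (intro always_eventually allI, simp add: main_def q_def field_simps)
qed

end
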